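(* Suppose each local cost $f_i$ is $L_i$-smooth for some $L_i>0$, the aggregate cost is $f(x)=g(Hx)$ for an $\alpha$-strongly convex ($\alpha>0$), $\mathbf{L}$-smooth $g:\mathbb{R}^m\to\mathbb{R}$ and $H\in\mathbb{R}^{m\times p}$, $f$ has a minimizer, and $D:=\sup_{x\in X^*}(\sum_{j=1}^n\|\nabla f_j(x)\|^2)^{1/2}<\infty$. Let $L=\max_iL_i$ and $C_2=\frac{2\mathbf{L}\alpha c_H}{\mathbf{L}+\alpha}$. Fix $J\in\mathbb{N}$, assume $t(k)\ge J$ for all $k\ge0$ and $$0<\mu<\min\Big\{\frac{2C_H}{\mathbf{L}+\alpha},\ \frac{C_2}{C_2+L(1+\sqrt2)}\cdot\frac{1-\beta^J}{L\beta^J}\Big\}.$$ For the NEAR-DGD$^+$ iterates let $A_k=\sqrt n\|\bar x_k-[\bar x_k]\|$ and $B_k=\|\mathbf{x}_k-\bar{\mathbf{x}}_k\|$, let $\gamma=\frac{1-\sqrt{1-C_2\mu}}{\mu L}$, and $$R=\max\Big\{A_0,\ B_0/\gamma,\ \frac{\mu D\beta^J}{\gamma-(\gamma+(1+\gamma)\mu L)\beta^J}\Big\}.$$ Then $A_k\le R$ and $B_k\le\gamma R$ for all $k\ge0$.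
   Context: Let $n,p\in\mathbb{N}$. $W$ is an $n\times n$ doubly stochastic matrix whose associated directed graph is strongly connected with a self-loop at every vertex; $1_n$ is the all-ones vector and $\beta\in[0,1)$ is the spectral norm of $W-\frac1n1_n1_n^\top$. $f_i:\mathbb{R}^p\to\mathbb{R}$, $f=\frac1n\sum_if_i$, $X^*$ the set of minimizers of $f$ and $[x]$ the Euclidean projection onto $X^*$. $h$ is $L$-smooth if $\|\nabla h(x)-\nabla h(y)\|\le L\|x-y\|$; $\alpha$-strongly convex if $h(y)\ge h(x)+\langle y-x,\nabla h(x)\rangle+\frac\alpha2\|y-x\|^2$. $c_H>0$ is a Hoffman coefficient: $\|Hx-H[x]\|^2\ge c_H\|x-[x]\|^2$ for all $x$; $C_H=1/\|H\|_2^2$ with $\|H\|_2$ the operator norm. NEAR-DGD$^+$: $\mathbf{x}_{k+1}=(W^{t(k)}\otimes I_p)(\mathbf{x}_k-\mu\nabla F(\mathbf{x}_k))$ with $\nabla F(\mathbf{x})=(\nabla f_1(x_1)^\top,\dots,\nabla f_n(x_n)^\top)^\top$ for $\mathbf{x}=(x_1^\top,\dots,x_n^\top)^\top$, $\otimes$ Kronecker product, $t(k)\in\mathbb{N}$; $\bar x_k=\frac1n\sum_ix_{i,k}$, $\bar{\mathbf{x}}_k=1_n\otimes\bar x_k$. Norms are Euclidean. *)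

theory Defs
  imports "HOL-Analysis.Analysis"
begin

fun matpow :: "real^'n^'n \<Rightarrow> nat \<Rightarrow> real^'n^'n" where
  "matpow W 0 = mat 1"
| "matpow W (Suc k) = W ** matpow W k"

text \<open>(M \<otimes> I_p) applied to a stacked vector (one block of dimension p per agent).\<close>
definition kron_apply :: "real^'n^'n \<Rightarrow> real^'p^'n \<Rightarrow> real^'p^'n" where
  "kron_apply M y = (\<chi> i. \<Sum>j\<in>UNIV. (M $ i $ j) *\<^sub>R (y $ j))"

definition doubly_stochastic :: "real^'n^'n \<Rightarrow> bool" where
  "doubly_stochastic W \<longleftrightarrow> (\<forall>i j. 0 \<le> W $ i $ j)
     \<and> (\<forall>i. (\<Sum>j\<in>UNIV. W $ i $ j) = 1) \<and> (\<forall>j. (\<Sum>i\<in>UNIV. W $ i $ j) = 1)"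

definition assoc_graph :: "real^'n^'n \<Rightarrow> ('n \<times> 'n) set" where
  "assoc_graph W = {(i, j). W $ i $ j > 0}"

definition strongly_connected_with_loops :: "real^'n^'n \<Rightarrow> bool" where
  "strongly_connected_with_loops W \<longleftrightarrow>
     (\<forall>i. (i, i) \<in> assoc_graph W) \<and> (\<forall>i j. (i, j) \<in> (assoc_graph W)\<^sup>*)"

definition beta_of :: "real^'n^'n \<Rightarrow> real" where
  "beta_of W = onorm (\<lambda>v. (W - (\<chi> i j. 1 / real CARD('n))) *v v)"

definition is_gradient :: "('a::real_inner \<Rightarrow> real) \<Rightarrow> ('a \<Rightarrow> 'a) \<Rightarrow> bool" where
  "is_gradient h gh \<longleftrightarrow> (\<forall>x. (h has_derivative (\<lambda>v. gh x \<bullet> v)) (at x))"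

definition smooth :: "('a::real_inner \<Rightarrow> real) \<Rightarrow> ('a \<Rightarrow> 'a) \<Rightarrow> real \<Rightarrow> bool" where
  "smooth h gh L \<longleftrightarrow> is_gradient h gh \<and> (\<forall>x y. norm (gh x - gh y) \<le> L * norm (x - y))"

definition strongly_convex :: "('a::real_inner \<Rightarrow> real) \<Rightarrow> ('a \<Rightarrow> 'a) \<Rightarrow> real \<Rightarrow> bool" where
  "strongly_convex h gh a \<longleftrightarrow> is_gradient h gh \<and>
     (\<forall>x y. h y \<ge> h x + (y - x) \<bullet> gh x + a / 2 * (norm (y - x))\<^sup>2)"

definition minimizers :: "('a \<Rightarrow> real) \<Rightarrow> 'a set" where
  "minimizers h = {x. \<forall>y. h x \<le> h y}"

definition near_dgd_plus ::
  "real^'n^'n \<Rightarrow> real \<Rightarrow> ('n \<Rightarrow> real^'p \<Rightarrow> real^'p) \<Rightarrow> (nat \<Rightarrow> nat) \<Rightarrow> (nat \<Rightarrow> real^'p^'n) \<Rightarrow> bool" where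
  "near_dgd_plus W \<mu> gf t x \<longleftrightarrow>
     (\<forall>k. x (Suc k) = kron_apply (matpow W (t k)) (x k - \<mu> *\<^sub>R (\<chi> i. gf i (x k $ i))))"

definition avg :: "real^'p^'n \<Rightarrow> real^'p" where
  "avg y = (1 / real CARD('n)) *\<^sub>R (\<Sum>i\<in>UNIV. y $ i)"

end

theory Submission
  imports Defs
begin

text \<open>Because W is doubly stochastic, the network average performs a centralized gradient step for
  f = g \<circ> H, perturbed by at most \<mu> L B k.  Co-coercivity of the gradient of the strongly
  convex, smooth g, combined with the Hoffman bound, makes this step a contraction with factor
  s = sqrt (1 - C2 \<mu>) towards the closest minimizer, so A (k+1) \<le> s A k + \<mu> L B k.
  The t k \<ge> J consensus rounds shrink the deviation from the average by \<beta>^J, so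
  B (k+1) \<le> \<beta>^J (B k + \<mu> L (A k + B k) + \<mu> D), the gradients at a minimizer being bounded by D.
  With \<gamma> = (1 - s) / (\<mu> L) the box A \<le> R, B \<le> \<gamma> R is invariant under the first recursion,
  and the step-size bound is exactly what makes it invariant under the second.\<close>

section \<open>Smooth and strongly convex functions\<close>

lemma smooth_descent:
  fixes h :: "'a::real_inner \<Rightarrow> real"
  assumes "smooth h gh M"
  shows "h y \<le> h x + (y - x) \<bullet> gh x + M / 2 * (norm (y - x))\<^sup>2"
proof -
  define d where "d = y - x"
  have grad: "\<And>z. (h has_derivative (\<lambda>v. gh z \<bullet> v)) (at z)"
    and lip: "\<And>a b. norm (gh a - gh b) \<le> M * norm (a - b)"
    using assms unfolding smooth_def is_gradient_def by auto
  define \<psi> where "\<psi> t = h (x + t *\<^sub>R d) - t * (gh x \<bullet> d) - M / 2 * t\<^sup>2 * (norm d)\<^sup>2" for t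
  have "((\<lambda>t. h (x + t *\<^sub>R d)) has_real_derivative (gh (x + t *\<^sub>R d) \<bullet> d)) (at t)" for t
  proof -
    have "((\<lambda>t. x + t *\<^sub>R d) has_derivative (\<lambda>s. s *\<^sub>R d)) (at t)"
      by (auto intro!: derivative_eq_intros)
    from has_derivative_compose[OF this grad] show ?thesis
      unfolding has_field_derivative_def by (rule has_derivative_eq_rhs) (simp add: fun_eq_iff)
  qed
  then have \<psi>_deriv: "DERIV \<psi> t :> (gh (x + t *\<^sub>R d) - gh x) \<bullet> d - M * t * (norm d)\<^sup>2" for t
    unfolding \<psi>_def by (auto intro!: derivative_eq_intros simp: inner_diff_left)
  have "(gh (x + t *\<^sub>R d) - gh x) \<bullet> d \<le> M * t * (norm d)\<^sup>2" if "0 \<le> t" for t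
  proof -
    have "(gh (x + t *\<^sub>R d) - gh x) \<bullet> d \<le> norm (gh (x + t *\<^sub>R d) - gh x) * norm d"
      by (rule norm_cauchy_schwarz)
    also have "\<dots> \<le> M * norm (t *\<^sub>R d) * norm d"
      using lip[of "x + t *\<^sub>R d" x] by (simp add: mult_right_mono)
    finally show ?thesis using that by (simp add: power2_eq_square mult.assoc)
  qed
  then have "\<psi> 1 \<le> \<psi> 0"
    by (intro DERIV_nonpos_imp_nonincreasing[of 0 1 \<psi>]) (use \<psi>_deriv in force)+
  then show ?thesis unfolding \<psi>_def d_def by (simp add: inner_commute)
qed

lemma smooth_mono: "smooth h gh L \<Longrightarrow> L \<le> L' \<Longrightarrow> smooth h gh L'"
  unfolding smooth_def by (meson mult_right_mono norm_ge_zero order_trans)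

lemma strongly_convex_le_smooth:
  fixes g :: "'a::euclidean_space \<Rightarrow> real"
  assumes "strongly_convex g gg a" "smooth g gg M"
  shows "a \<le> M"
proof -
  obtain d :: 'a where "d \<in> Basis" using nonempty_Basis by blast
  then have "norm d = 1" by simp
  moreover have "g d \<ge> g 0 + d \<bullet> gg 0 + a / 2 * (norm d)\<^sup>2"
    using assms(1) unfolding strongly_convex_def by (metis diff_zero)
  moreover have "g d \<le> g 0 + d \<bullet> gg 0 + M / 2 * (norm d)\<^sup>2"
    using smooth_descent[OF assms(2), of d 0] by simp
  ultimately show ?thesis by simp
qed

lemma strongly_convex_strongly_monotone:
  assumes "strongly_convex g gg a"
  shows "a * (norm (y - x))\<^sup>2 \<le> (gg y - gg x) \<bullet> (y - x)"
proof -
  have "g y \<ge> g x + (y - x) \<bullet> gg x + a / 2 * (norm (y - x))\<^sup>2"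
    and "g x \<ge> g y + (x - y) \<bullet> gg y + a / 2 * (norm (x - y))\<^sup>2"
    using assms unfolding strongly_convex_def by blast+
  then show ?thesis by (simp add: norm_minus_commute inner_diff_left inner_diff_right inner_commute)
qed

text \<open>Evaluate the lower bound at q - s (gh q - gh p) and take s = 1 / M; for M = 0, letting s grow
  forces gh y = gh x.\<close>
lemma convex_smooth_gradient_cocoercive:
  fixes h :: "'a::real_inner \<Rightarrow> real"
  assumes lower: "\<And>p q. h p + (q - p) \<bullet> gh p \<le> h q"
    and upper: "\<And>p q. h q \<le> h p + (q - p) \<bullet> gh p + M / 2 * (norm (q - p))\<^sup>2"
    and "M \<ge> 0"
  shows "(norm (gh y - gh x))\<^sup>2 \<le> M * ((gh y - gh x) \<bullet> (y - x))"
proof -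
  have one: "h p + (q - p) \<bullet> gh p + (s - M * s\<^sup>2 / 2) * (norm (gh q - gh p))\<^sup>2 \<le> h q" for p q s
  proof -
    define w where "w = gh q - gh p"
    define z where "z = q - s *\<^sub>R w"
    have "h p + (z - p) \<bullet> gh p \<le> h z" by (rule lower)
    moreover have "h z \<le> h q + (z - q) \<bullet> gh q + M / 2 * (norm (z - q))\<^sup>2" by (rule upper)
    moreover have "w \<bullet> gh q - w \<bullet> gh p = (norm w)\<^sup>2"
      unfolding w_def by (simp add: power2_norm_eq_inner inner_diff_right)
    ultimately show ?thesis
      unfolding z_def w_def[symmetric] by (simp add: algebra_simps)
  qed
  define v where "v = gh y - gh x"
  have key: "2 * (s - M * s\<^sup>2 / 2) * (norm v)\<^sup>2 \<le> v \<bullet> (y - x)" for s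
    using one[of x y s] one[of y x s]
    by (simp add: v_def norm_minus_commute inner_commute algebra_simps)
  show ?thesis
  proof (cases "M = 0")
    case True
    have "v = 0"
    proof (rule ccontr)
      assume "v \<noteq> 0"
      then have "2 * ((v \<bullet> (y - x) + 1) / (2 * (norm v)\<^sup>2)) * (norm v)\<^sup>2 = v \<bullet> (y - x) + 1"
        by simp
      then show False using key[of "(v \<bullet> (y - x) + 1) / (2 * (norm v)\<^sup>2)"] True by simp
    qed
    then show ?thesis using True by (simp add: v_def)
  next
    case False
    then have "M > 0" using \<open>M \<ge> 0\<close> by simp
    moreover have "2 * (1 / M - M * (1 / M)\<^sup>2 / 2) = 1 / M"
      using \<open>M > 0\<close> by (simp add: field_simps power2_eq_square)
    ultimately show ?thesis using key[of "1 / M"] by (simp add: v_def field_simps)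
  qed
qed

text \<open>Apply co-coercivity to the convex, (Lg - a)-smooth function g - a/2 |.|^2.\<close>
lemma strongly_convex_smooth_cocoercive:
  fixes g :: "'a::euclidean_space \<Rightarrow> real"
  assumes sc: "strongly_convex g gg a" and sm: "smooth g gg Lg" and "a > 0"
  shows "a * Lg / (a + Lg) * (norm (y - x))\<^sup>2 + 1 / (a + Lg) * (norm (gg y - gg x))\<^sup>2
           \<le> (gg y - gg x) \<bullet> (y - x)"
proof -
  have "a \<le> Lg" by (rule strongly_convex_le_smooth[OF sc sm])
  have quad: "a / 2 * (norm (q - p))\<^sup>2 - a / 2 * (norm q)\<^sup>2 + a / 2 * (norm p)\<^sup>2 = - a * ((q - p) \<bullet> p)"
    for p q :: 'a
    by (simp add: power2_norm_eq_inner inner_commute algebra_simps)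
  define \<phi> where "\<phi> z = g z - a / 2 * (norm z)\<^sup>2" for z
  define g\<phi> where "g\<phi> z = gg z - a *\<^sub>R z" for z
  have "(norm (g\<phi> y - g\<phi> x))\<^sup>2 \<le> (Lg - a) * ((g\<phi> y - g\<phi> x) \<bullet> (y - x))"
  proof (rule convex_smooth_gradient_cocoercive)
    show "\<phi> p + (q - p) \<bullet> g\<phi> p \<le> \<phi> q" for p q
    proof -
      have "g p + (q - p) \<bullet> gg p + a / 2 * (norm (q - p))\<^sup>2 \<le> g q"
        using sc unfolding strongly_convex_def by blast
      then show ?thesis using quad[of q p] unfolding \<phi>_def g\<phi>_def
        by (simp add: algebra_simps)
    qed
    show "\<phi> q \<le> \<phi> p + (q - p) \<bullet> g\<phi> p + (Lg - a) / 2 * (norm (q - p))\<^sup>2" for p q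
      using smooth_descent[OF sm, of q p] quad[of q p] unfolding \<phi>_def g\<phi>_def
      by (simp add: algebra_simps diff_divide_distrib)
  qed (use \<open>a \<le> Lg\<close> in simp)
  then have "(norm (gg y - gg x))\<^sup>2 + a * Lg * (norm (y - x))\<^sup>2 \<le> (a + Lg) * ((gg y - gg x) \<bullet> (y - x))"
    unfolding g\<phi>_def power2_norm_eq_inner
    by (simp add: inner_commute algebra_simps power2_eq_square)
  moreover have "a + Lg > 0" using \<open>a > 0\<close> \<open>a \<le> Lg\<close> by simp
  ultimately have "((norm (gg y - gg x))\<^sup>2 + a * Lg * (norm (y - x))\<^sup>2) / (a + Lg) \<le> (gg y - gg x) \<bullet> (y - x)"
    by (metis pos_divide_le_eq mult.commute)
  then show ?thesis by (simp add: add_divide_distrib algebra_simps)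
qed

lemma is_gradient_unique:
  assumes "is_gradient h g1" "is_gradient h g2"
  shows "g1 = g2"
proof
  fix z
  have "(\<lambda>v. g1 z \<bullet> v) = (\<lambda>v. g2 z \<bullet> v)"
    using assms unfolding is_gradient_def by (blast intro: has_derivative_unique)
  then have "(g1 z - g2 z) \<bullet> (g1 z - g2 z) = 0"
    by (metis inner_diff_left right_minus_eq)
  then show "g1 z = g2 z" by simp
qed

lemma inner_transpose_matrix_vector:
  fixes H :: "real^'p^'m"
  shows "(transpose H *v w) \<bullet> v = w \<bullet> (H *v v)"
  by (simp add: dot_lmul_matrix)

lemma is_gradient_compose_matrix:
  fixes H :: "real^'p^'m"
  assumes "is_gradient g gg"
  shows "is_gradient (\<lambda>z. g (H *v z)) (\<lambda>z. transpose H *v gg (H *v z))"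
  unfolding is_gradient_def inner_transpose_matrix_vector
proof
  fix z
  have "((*v) H has_derivative (*v) H) (at z)"
    by (simp add: bounded_linear_imp_has_derivative)
  from has_derivative_compose[OF this] assms
  show "((\<lambda>z. g (H *v z)) has_derivative (\<lambda>v. gg (H *v z) \<bullet> (H *v v))) (at z)"
    unfolding is_gradient_def by blast
qed

lemma is_gradient_average:
  fixes f :: "'n::finite \<Rightarrow> real^'p \<Rightarrow> real"
  assumes "\<And>i. is_gradient (f i) (gf i)"
  shows "is_gradient (\<lambda>z. (1 / real CARD('n)) * (\<Sum>i\<in>UNIV. f i z)) (\<lambda>z. avg (\<chi> i. gf i z))"
  unfolding is_gradient_def avg_def
proof
  fix z
  have "((\<lambda>z. (1 / real CARD('n)) * (\<Sum>i\<in>UNIV. f i z))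
          has_derivative (\<lambda>v. (1 / real CARD('n)) * (\<Sum>i\<in>UNIV. gf i z \<bullet> v))) (at z)"
    using assms unfolding is_gradient_def by (intro has_derivative_mult_right has_derivative_sum) blast
  then show "((\<lambda>z. (1 / real CARD('n)) * (\<Sum>i\<in>UNIV. f i z)) has_derivative
              (\<lambda>v. ((1 / real CARD('n)) *\<^sub>R (\<Sum>i\<in>UNIV. (\<chi> i. gf i z) $ i)) \<bullet> v)) (at z)"
    by (simp add: inner_sum_left)
qed

lemma closed_minimizers:
  assumes "is_gradient h gh"
  shows "closed (minimizers h)"
proof -
  have "continuous_on UNIV h"
    using assms unfolding is_gradient_def
    by (meson continuous_at_imp_continuous_on has_derivative_continuous)
  then have "closed {z. h z \<le> h y}" for y
    by (rule closed_Collect_le) simp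
  moreover have "minimizers h = (\<Inter>y. {z. h z \<le> h y})"
    unfolding minimizers_def by auto
  ultimately show ?thesis by auto
qed

lemma is_gradient_minimizer_zero:
  assumes "is_gradient h gh" "z \<in> minimizers h"
  shows "gh z = 0"
proof -
  have "(\<lambda>v. gh z \<bullet> v) = (\<lambda>v. 0)"
    by (rule differential_zero_maxmin[of z UNIV h])
       (use assms in \<open>auto simp: is_gradient_def minimizers_def\<close>)
  then have "gh z \<bullet> gh z = 0" by meson
  then show ?thesis by simp
qed

lemma strongly_convex_compose_minimizers_UNIV:
  fixes H :: "real^'p^'m"
  assumes sc: "strongly_convex g gg a" and "a > 0"
    and all_min: "minimizers (\<lambda>z. g (H *v z)) = UNIV"
  shows "H = 0"
proof (rule matrix_eq[THEN iffD2], intro allI)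
  fix z
  have grad: "is_gradient (\<lambda>z. g (H *v z)) (\<lambda>z. transpose H *v gg (H *v z))"
    using sc unfolding strongly_convex_def by (blast intro: is_gradient_compose_matrix)
  have zero: "transpose H *v gg (H *v y) = 0" for y
    using is_gradient_minimizer_zero[OF grad] all_min by blast
  have "a * (norm (H *v z - H *v 0))\<^sup>2 \<le> (gg (H *v z) - gg (H *v 0)) \<bullet> (H *v z - H *v 0)"
    by (rule strongly_convex_strongly_monotone[OF sc])
  also have "\<dots> = (transpose H *v gg (H *v z) - transpose H *v gg (H *v 0)) \<bullet> z"
    by (simp add: dot_lmul_matrix inner_diff_left)
  finally have "a * (norm (H *v z))\<^sup>2 \<le> 0" using zero[of z] zero[of 0] by simp
  then show "H *v z = 0 *v z" using \<open>a > 0\<close> by (simp add: mult_le_0_iff)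
qed

lemma norm_transpose_matrix_vector_le:
  fixes H :: "real^'p^'m"
  shows "norm (transpose H *v w) \<le> onorm ((*v) H) * norm w"
proof -
  define G where "G = transpose H *v w"
  have "(norm G)\<^sup>2 = w \<bullet> (H *v G)"
    unfolding G_def by (simp add: power2_norm_eq_inner dot_lmul_matrix)
  also have "\<dots> \<le> norm w * norm (H *v G)"
    by (rule norm_cauchy_schwarz)
  also have "\<dots> \<le> norm w * (onorm ((*v) H) * norm G)"
    by (simp add: onorm mult_left_mono)
  finally have "norm G * norm G \<le> (onorm ((*v) H) * norm w) * norm G"
    by (simp add: power2_eq_square algebra_simps)
  then show ?thesis
    unfolding G_def[symmetric]
    by (cases "norm G = 0") (auto simp: onorm_pos_le intro: mult_right_le_imp_le)
qed

text \<open>Co-coercivity of the gradient of g absorbs the quadratic term of the expanded square, and the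
  Hoffman bound turns |H (z - p)| into |z - p|.\<close>
lemma gradient_step_contraction:
  fixes H :: "real^'p^'m" and g :: "real^'m \<Rightarrow> real"
  assumes sc: "strongly_convex g gg a" and sm: "smooth g gg Lg" and "a > 0"
    and crit: "transpose H *v gg (H *v p) = 0"
    and hoffman: "cH * (norm (z - p))\<^sup>2 \<le> (norm (H *v z - H *v p))\<^sup>2"
    and "0 \<le> \<mu>" and step_size: "\<mu> < 2 * (1 / (onorm ((*v) H))\<^sup>2) / (Lg + a)"
  shows "(norm (z - p - \<mu> *\<^sub>R (transpose H *v gg (H *v z))))\<^sup>2
           \<le> (1 - 2 * Lg * a * cH / (Lg + a) * \<mu>) * (norm (z - p))\<^sup>2"
proof -
  define e where "e = z - p"
  define \<Delta> where "\<Delta> = gg (H *v z) - gg (H *v p)"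
  define G where "G = transpose H *v \<Delta>"
  have G_eq: "transpose H *v gg (H *v z) = G"
    using crit unfolding G_def \<Delta>_def by (simp add: matrix_vector_mult_diff_distrib)
  have "a \<le> Lg" by (rule strongly_convex_le_smooth[OF sc sm])
  then have "a + Lg > 0" using \<open>a > 0\<close> by simp
  have step: "\<mu> * (onorm ((*v) H))\<^sup>2 \<le> 2 / (a + Lg)"
  proof (cases "onorm ((*v) H) = 0")
    case False
    then have "0 < (onorm ((*v) H))\<^sup>2 * (a + Lg)" using \<open>a + Lg > 0\<close> by simp
    moreover have "\<mu> < 2 / ((onorm ((*v) H))\<^sup>2 * (a + Lg))" using step_size by (simp add: add.commute)
    ultimately have "\<mu> * (onorm ((*v) H))\<^sup>2 * (a + Lg) < 2" by (simp add: pos_less_divide_eq mult.assoc)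
    then show ?thesis using pos_le_divide_eq[OF \<open>a + Lg > 0\<close>] by simp
  qed (use \<open>a + Lg > 0\<close> in simp)
  have coco: "a * Lg / (a + Lg) * (norm (H *v e))\<^sup>2 + 1 / (a + Lg) * (norm \<Delta>)\<^sup>2 \<le> e \<bullet> G"
  proof -
    have "e \<bullet> G = \<Delta> \<bullet> (H *v e)"
      unfolding G_def by (metis inner_commute inner_transpose_matrix_vector)
    then show ?thesis
      using strongly_convex_smooth_cocoercive[OF sc sm \<open>a > 0\<close>, of "H *v z" "H *v p"]
      unfolding e_def \<Delta>_def by (simp add: matrix_vector_mult_diff_distrib)
  qed
  have "(norm G)\<^sup>2 \<le> (onorm ((*v) H))\<^sup>2 * (norm \<Delta>)\<^sup>2"
    using power_mono[OF norm_transpose_matrix_vector_le[of H \<Delta>], of 2]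
    unfolding G_def by (simp add: power_mult_distrib)
  then have "\<mu>\<^sup>2 * (norm G)\<^sup>2 \<le> \<mu> * (\<mu> * (onorm ((*v) H))\<^sup>2) * (norm \<Delta>)\<^sup>2"
    using \<open>0 \<le> \<mu>\<close> by (simp add: mult_left_mono power2_eq_square mult.assoc)
  also have "\<dots> \<le> \<mu> * (2 / (a + Lg)) * (norm \<Delta>)\<^sup>2"
    using step \<open>0 \<le> \<mu>\<close> by (intro mult_right_mono mult_left_mono) auto
  finally have quad: "\<mu>\<^sup>2 * (norm G)\<^sup>2 \<le> 2 * \<mu> * (1 / (a + Lg) * (norm \<Delta>)\<^sup>2)"
    by (simp add: ac_simps)
  have "0 \<le> 2 * \<mu> * (a * Lg / (a + Lg))"
    using \<open>a > 0\<close> \<open>a \<le> Lg\<close> \<open>0 \<le> \<mu>\<close> by simp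
  from mult_left_mono[OF hoffman this]
  have "2 * \<mu> * (a * Lg / (a + Lg)) * (cH * (norm e)\<^sup>2) \<le> 2 * \<mu> * (a * Lg / (a + Lg)) * (norm (H *v e))\<^sup>2"
    unfolding e_def by (simp add: matrix_vector_mult_diff_distrib)
  moreover have "(norm (e - \<mu> *\<^sub>R G))\<^sup>2 = (norm e)\<^sup>2 - 2 * \<mu> * (e \<bullet> G) + \<mu>\<^sup>2 * (norm G)\<^sup>2"
    unfolding power2_norm_eq_inner by (simp add: inner_commute algebra_simps power2_eq_square)
  ultimately have "(norm (e - \<mu> *\<^sub>R G))\<^sup>2 \<le> (norm e)\<^sup>2 - 2 * \<mu> * (a * Lg / (a + Lg) * (cH * (norm e)\<^sup>2))"
    using mult_left_mono[OF coco, of "2 * \<mu>"] quad \<open>0 \<le> \<mu>\<close> by (simp add: algebra_simps)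
  also have "\<dots> = (1 - 2 * Lg * a * cH / (Lg + a) * \<mu>) * (norm e)\<^sup>2"
    by (simp add: algebra_simps)
  finally show ?thesis
    unfolding G_eq e_def .
qed

lemma composite_gradient_step_contraction:
  fixes H :: "real^'p^'m" and g :: "real^'m \<Rightarrow> real" and F :: "real^'p \<Rightarrow> real"
    and a Lg cH :: real
  defines "proj \<equiv> closest_point (minimizers F)" and "C \<equiv> 2 * Lg * a * cH / (Lg + a)"
  assumes grad: "is_gradient F G" and F_eq: "\<And>z. F z = g (H *v z)" and "minimizers F \<noteq> {}"
    and sc: "strongly_convex g gg a" and "0 < a" and sm: "smooth g gg Lg"
    and hoffman: "\<And>z. cH * (norm (z - proj z))\<^sup>2 \<le> (norm (H *v z - H *v proj z))\<^sup>2"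
    and "0 < \<mu>" and step_size: "\<mu> < 2 * (1 / (onorm ((*v) H))\<^sup>2) / (Lg + a)"
  shows "closed (minimizers F)" and "C * \<mu> \<le> 1"
    and "norm (z - proj z - \<mu> *\<^sub>R G z) \<le> sqrt (1 - C * \<mu>) * norm (z - proj z)"
proof -
  have F_eq': "F = (\<lambda>z. g (H *v z))" using F_eq by auto
  have grad': "is_gradient F (\<lambda>z. transpose H *v gg (H *v z))"
    unfolding F_eq' using sc unfolding strongly_convex_def by (blast intro: is_gradient_compose_matrix)
  then have G_eq: "G = (\<lambda>z. transpose H *v gg (H *v z))" by (rule is_gradient_unique[OF grad])
  show "closed (minimizers F)" by (rule closed_minimizers[OF grad])
  then have proj_in: "proj z \<in> minimizers F" for z
    unfolding proj_def using \<open>minimizers F \<noteq> {}\<close> by (rule closest_point_in_set)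
  have sq: "(norm (z - proj z - \<mu> *\<^sub>R G z))\<^sup>2 \<le> (1 - C * \<mu>) * (norm (z - proj z))\<^sup>2" for z
    unfolding G_eq C_def
    by (rule gradient_step_contraction[OF sc sm \<open>0 < a\<close> _ hoffman _ step_size])
       (use is_gradient_minimizer_zero[OF grad' proj_in] \<open>0 < \<mu>\<close> in auto)
  show "C * \<mu> \<le> 1"
  proof -
    \<comment> \<open>For H = 0 the junk value 1 / 0 = 0 turns the step-size bound into \<mu> < 0.\<close>
    have "onorm ((*v) (0::real^'p^'m)) = 0" by (simp add: onorm_eq_0)
    then have "H \<noteq> 0" using step_size \<open>0 < \<mu>\<close> by auto
    then obtain z where "z \<notin> minimizers F"
      using strongly_convex_compose_minimizers_UNIV[OF sc \<open>0 < a\<close>] unfolding F_eq' by blast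
    then have "0 < (norm (z - proj z))\<^sup>2" using proj_in by (metis zero_less_power2 right_minus_eq norm_eq_zero)
    moreover have "0 \<le> (1 - C * \<mu>) * (norm (z - proj z))\<^sup>2"
      using order_trans[OF zero_le_power2 sq[of z]] .
    ultimately show ?thesis by (simp add: zero_le_mult_iff)
  qed
  then show "norm (z - proj z - \<mu> *\<^sub>R G z) \<le> sqrt (1 - C * \<mu>) * norm (z - proj z)"
    using real_le_rsqrt[OF sq[of z]] by (simp add: real_sqrt_mult)
qed

section \<open>Averaging and consensus\<close>

definition mean :: "real^'n \<Rightarrow> real" where
  "mean u = (\<Sum>i\<in>UNIV. u $ i) / real CARD('n)"

lemma norm_sq_rows: "(norm (y::real^'p^'n))\<^sup>2 = (\<Sum>i\<in>UNIV. (norm (y $ i))\<^sup>2)"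
  unfolding power2_norm_eq_inner inner_vec_def by simp

lemma norm_sq_columns: "(norm (y::real^'p^'n))\<^sup>2 = (\<Sum>c\<in>UNIV. (norm (column c y))\<^sup>2)"
  unfolding power2_norm_eq_inner inner_vec_def column_def
  by (simp add: sum.swap[of _ "UNIV::'n set"])

lemma column_kron_apply: "column c (kron_apply M y) = M *v column c y"
  unfolding column_def kron_apply_def matrix_vector_mult_def by (simp add: vec_eq_iff)

lemma column_consensus_error:
  "column c (y - (\<chi> i. avg y)) = column c y - mean (column c y) *\<^sub>R 1"
  unfolding column_def avg_def mean_def by (simp add: vec_eq_iff)

lemma avg_diff [simp]: "avg (y - z) = avg y - avg z"
  unfolding avg_def by (simp add: sum_subtractf algebra_simps)

lemma avg_scaleR [simp]: "avg (a *\<^sub>R y) = a *\<^sub>R avg y"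
  unfolding avg_def by (simp add: scaleR_sum_right[symmetric])

lemma mean_diff: "mean (u - v) = mean u - mean v"
  unfolding mean_def by (simp add: sum_subtractf diff_divide_distrib)

lemma mean_scaleR: "mean (a *\<^sub>R u) = a * mean u"
  unfolding mean_def by (simp add: sum_distrib_left[symmetric])

lemma mean_one [simp]: "mean (1 :: real^'n) = 1"
  unfolding mean_def by simp

lemma doubly_stochastic_mult_one:
  "doubly_stochastic W \<Longrightarrow> W *v 1 = 1"
  unfolding doubly_stochastic_def matrix_vector_mult_def by (simp add: vec_eq_iff)

lemma doubly_stochastic_mean:
  assumes "doubly_stochastic W"
  shows "mean (W *v u) = mean u"
proof -
  have "(\<Sum>i\<in>UNIV. (W *v u) $ i) = (\<Sum>i\<in>UNIV. \<Sum>j\<in>UNIV. W $ i $ j * u $ j)"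
    unfolding matrix_vector_mult_def by simp
  also have "\<dots> = (\<Sum>j\<in>UNIV. (\<Sum>i\<in>UNIV. W $ i $ j) * u $ j)"
    by (subst sum.swap) (simp add: sum_distrib_right)
  also have "\<dots> = (\<Sum>j\<in>UNIV. u $ j)"
    using assms unfolding doubly_stochastic_def by simp
  finally show ?thesis unfolding mean_def by simp
qed

lemma matpow_Suc_mult: "matpow W (Suc t) *v u = W *v (matpow W t *v u)"
  by (simp add: matrix_vector_mul_assoc)

lemma matpow_mult_one: "doubly_stochastic W \<Longrightarrow> matpow W t *v 1 = 1"
  by (induction t) (simp_all only: matpow_Suc_mult doubly_stochastic_mult_one, simp)

lemma matpow_mean: "doubly_stochastic W \<Longrightarrow> mean (matpow W t *v u) = mean u"
  by (induction t) (simp_all only: matpow_Suc_mult doubly_stochastic_mean, simp)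

lemma avg_column: "avg y $ c = mean (column c y)"
  unfolding avg_def mean_def column_def by simp

lemma avg_kron_apply_matpow:
  "doubly_stochastic W \<Longrightarrow> avg (kron_apply (matpow W t) y) = avg y"
  by (simp add: vec_eq_iff avg_column column_kron_apply matpow_mean)

lemma beta_of_nonneg: "0 \<le> beta_of W"
  unfolding beta_of_def by (simp add: onorm_pos_le)

text \<open>On vectors of mean zero, W acts as W - 11^T/n, whose norm is beta_of W.\<close>
lemma matpow_deviation_contraction:
  fixes W :: "real^'n^'n"
  assumes ds: "doubly_stochastic W"
  shows "norm (matpow W t *v u - mean u *\<^sub>R 1) \<le> beta_of W ^ t * norm (u - mean u *\<^sub>R 1)"
proof -
  define P where "P = W - (\<chi> i j. 1 / real CARD('n))"
  have P_eq: "P *v v = W *v v - mean v *\<^sub>R 1" for v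
  proof -
    have "(\<chi> i j. 1 / real CARD('n)) *v v = mean v *\<^sub>R 1"
      unfolding mean_def matrix_vector_mult_def by (simp add: vec_eq_iff sum_divide_distrib)
    then show ?thesis unfolding P_def by (simp add: matrix_vector_mult_diff_rdistrib)
  qed
  have P_norm: "norm (P *v v) \<le> beta_of W * norm v" for v
    unfolding P_def beta_of_def by (rule onorm) simp
  have "norm (matpow W t *v v) \<le> beta_of W ^ t * norm v" if "mean v = 0" for v
  proof (induction t)
    case (Suc t)
    have "norm (matpow W (Suc t) *v v) = norm (P *v (matpow W t *v v))"
      unfolding matpow_Suc_mult using P_eq matpow_mean[OF ds] that by simp
    also have "\<dots> \<le> beta_of W * norm (matpow W t *v v)"
      by (rule P_norm)
    also have "\<dots> \<le> beta_of W * (beta_of W ^ t * norm v)"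
      using Suc beta_of_nonneg by (rule mult_left_mono)
    finally show ?case by simp
  qed simp
  moreover have "mean (u - mean u *\<^sub>R 1) = 0" by (simp add: mean_diff mean_scaleR)
  moreover have "matpow W t *v (u - mean u *\<^sub>R 1) = matpow W t *v u - mean u *\<^sub>R 1"
    by (simp add: matrix_vector_mult_diff_distrib matrix_vector_mult_scaleR matpow_mult_one[OF ds])
  ultimately show ?thesis by metis
qed

lemma consensus_error_kron_apply_matpow:
  fixes W :: "real^'n^'n"
  assumes ds: "doubly_stochastic W"
  shows "norm (kron_apply (matpow W t) y - (\<chi> i. avg (kron_apply (matpow W t) y)))
           \<le> beta_of W ^ t * norm (y - (\<chi> i. avg y))"
proof -
  have "(norm (kron_apply (matpow W t) y - (\<chi> i. avg (kron_apply (matpow W t) y))))\<^sup>2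
      = (\<Sum>c\<in>UNIV. (norm (matpow W t *v column c y - mean (column c y) *\<^sub>R 1))\<^sup>2)"
    unfolding norm_sq_columns[of "kron_apply (matpow W t) y - _"] column_consensus_error
    by (simp add: column_kron_apply matpow_mean[OF ds])
  also have "\<dots> \<le> (\<Sum>c\<in>UNIV. (beta_of W ^ t * norm (column c y - mean (column c y) *\<^sub>R 1))\<^sup>2)"
    by (intro sum_mono power_mono matpow_deviation_contraction[OF ds]) auto
  also have "\<dots> = (beta_of W ^ t * norm (y - (\<chi> i. avg y)))\<^sup>2"
    unfolding power_mult_distrib norm_sq_columns[of "y - _"] column_consensus_error
    by (simp add: sum_distrib_left)
  finally show ?thesis
    by (rule power2_le_imp_le) (simp add: beta_of_nonneg)
qed

lemma norm_const_stack: "norm ((\<chi> i. v) :: real^'p^'n) = sqrt (real CARD('n)) * norm v"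
proof -
  have "(norm ((\<chi> i. v) :: real^'p^'n))\<^sup>2 = real CARD('n) * (norm v)\<^sup>2"
    by (simp add: norm_sq_rows)
  then show ?thesis by (metis real_sqrt_abs real_sqrt_mult abs_norm_cancel)
qed

lemma norm_sq_consensus_decomposition:
  fixes y :: "real^'p^'n"
  shows "(norm y)\<^sup>2 = (norm (y - (\<chi> i. avg y)))\<^sup>2 + real CARD('n) * (norm (avg y))\<^sup>2"
proof -
  have "(\<Sum>i\<in>UNIV. y $ i) = real CARD('n) *\<^sub>R avg y"
    unfolding avg_def by simp
  then have "orthogonal (y - (\<chi> i. avg y)) (\<chi> i. avg y)"
    unfolding orthogonal_def inner_vec_def[of "y - _"]
    by (simp add: inner_diff_left sum_subtractf flip: inner_sum_left)
  from norm_add_Pythagorean[OF this] show ?thesis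
    by (simp add: norm_const_stack power_mult_distrib)
qed

lemma norm_consensus_error_le: "norm (y - (\<chi> i. avg y)) \<le> norm (y :: real^'p^'n)"
proof (rule power2_le_imp_le)
  have "0 \<le> real CARD('n) * (norm (avg y))\<^sup>2" by simp
  then show "(norm (y - (\<chi> i. avg y)))\<^sup>2 \<le> (norm y)\<^sup>2"
    using norm_sq_consensus_decomposition[of y] by linarith
qed simp

lemma norm_avg_le: "sqrt (real CARD('n)) * norm (avg y) \<le> norm (y :: real^'p^'n)"
proof (rule power2_le_imp_le)
  have "(sqrt (real CARD('n)) * norm (avg y))\<^sup>2 = real CARD('n) * (norm (avg y))\<^sup>2"
    by (simp add: power_mult_distrib)
  then show "(sqrt (real CARD('n)) * norm (avg y))\<^sup>2 \<le> (norm y)\<^sup>2"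
    using norm_sq_consensus_decomposition[of y] by simp
qed simp

lemma norm_stack_lipschitz:
  fixes h :: "'n::finite \<Rightarrow> real^'p \<Rightarrow> real^'q"
  assumes "\<And>i a b. norm (h i a - h i b) \<le> L * norm (a - b)" "L \<ge> 0"
  shows "norm ((\<chi> i. h i (y $ i)) - (\<chi> i. h i (z $ i))) \<le> L * norm (y - z)"
proof (rule power2_le_imp_le)
  have "(norm ((\<chi> i. h i (y $ i)) - (\<chi> i. h i (z $ i))))\<^sup>2 = (\<Sum>i\<in>UNIV. (norm (h i (y $ i) - h i (z $ i)))\<^sup>2)"
    by (simp add: norm_sq_rows[of "_ - _"])
  also have "\<dots> \<le> (\<Sum>i\<in>UNIV. (L * norm (y $ i - z $ i))\<^sup>2)"
    by (intro sum_mono power_mono assms) auto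
  also have "\<dots> = (L * norm (y - z))\<^sup>2"
    by (simp add: power_mult_distrib norm_sq_rows[of "y - z"] sum_distrib_left)
  finally show "(norm ((\<chi> i. h i (y $ i)) - (\<chi> i. h i (z $ i))))\<^sup>2 \<le> (L * norm (y - z))\<^sup>2" .
qed (use assms in simp)

lemma near_dgd_average_step:
  fixes W :: "real^'n^'n" and gf :: "'n \<Rightarrow> real^'p \<Rightarrow> real^'p" and x x' :: "real^'p^'n"
  assumes ds: "doubly_stochastic W"
    and step: "x' = kron_apply (matpow W t) (x - \<mu> *\<^sub>R (\<chi> i. gf i (x $ i)))"
    and lip: "\<And>i a b. norm (gf i a - gf i b) \<le> L * norm (a - b)" and "0 \<le> L" "0 \<le> \<mu>"
    and "closed S" "S \<noteq> {}"
    and contr: "norm (avg x - closest_point S (avg x) - \<mu> *\<^sub>R avg (\<chi> i. gf i (avg x)))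
                  \<le> s * norm (avg x - closest_point S (avg x))"
  shows "sqrt (real CARD('n)) * norm (avg x' - closest_point S (avg x'))
           \<le> s * (sqrt (real CARD('n)) * norm (avg x - closest_point S (avg x)))
             + \<mu> * L * norm (x - (\<chi> i. avg x))"
proof -
  define p where "p = closest_point S (avg x)"
  define \<Delta> where "\<Delta> = (\<chi> i. gf i (avg x)) - (\<chi> i. gf i (x $ i))"
  have "norm (avg x' - closest_point S (avg x')) \<le> norm (avg x' - p)"
    using closest_point_le[OF \<open>closed S\<close> closest_point_in_set[OF \<open>closed S\<close> \<open>S \<noteq> {}\<close>]]
    unfolding p_def by (simp add: dist_norm)
  also have "avg x' - p = (avg x - p - \<mu> *\<^sub>R avg (\<chi> i. gf i (avg x))) + \<mu> *\<^sub>R avg \<Delta>"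
    unfolding step avg_kron_apply_matpow[OF ds] \<Delta>_def by (simp add: algebra_simps)
  also have "norm \<dots> \<le> norm (avg x - p - \<mu> *\<^sub>R avg (\<chi> i. gf i (avg x))) + norm (\<mu> *\<^sub>R avg \<Delta>)"
    by (rule norm_triangle_ineq)
  also have "\<dots> \<le> s * norm (avg x - p) + \<mu> * norm (avg \<Delta>)"
    using contr \<open>0 \<le> \<mu>\<close> unfolding p_def by simp
  finally have avg_step: "norm (avg x' - closest_point S (avg x')) \<le> s * norm (avg x - p) + \<mu> * norm (avg \<Delta>)" .
  have "norm \<Delta> \<le> L * norm ((\<chi> i. avg x) - x)"
    unfolding \<Delta>_def using norm_stack_lipschitz[of gf L "\<chi> i. avg x" x, OF lip \<open>0 \<le> L\<close>] by simp
  then have "sqrt (real CARD('n)) * norm (avg \<Delta>) \<le> L * norm (x - (\<chi> i. avg x))"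
    using norm_avg_le[of \<Delta>] by (simp add: norm_minus_commute)
  then have "\<mu> * (sqrt (real CARD('n)) * norm (avg \<Delta>)) \<le> \<mu> * (L * norm (x - (\<chi> i. avg x)))"
    using \<open>0 \<le> \<mu>\<close> by (rule mult_left_mono)
  moreover have "sqrt (real CARD('n)) * norm (avg x' - closest_point S (avg x'))
      \<le> s * (sqrt (real CARD('n)) * norm (avg x - p)) + \<mu> * (sqrt (real CARD('n)) * norm (avg \<Delta>))"
    using mult_left_mono[OF avg_step, of "sqrt (real CARD('n))"] by (simp add: algebra_simps)
  ultimately show ?thesis unfolding p_def by simp
qed

lemma near_dgd_consensus_step:
  fixes W :: "real^'n^'n" and gf :: "'n \<Rightarrow> real^'p \<Rightarrow> real^'p" and x x' :: "real^'p^'n"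
  assumes ds: "doubly_stochastic W"
    and step: "x' = kron_apply (matpow W t) (x - \<mu> *\<^sub>R (\<chi> i. gf i (x $ i)))"
    and lip: "\<And>i a b. norm (gf i a - gf i b) \<le> L * norm (a - b)" and "0 \<le> L" "0 \<le> \<mu>"
    and "beta_of W ^ t \<le> b" and grad_p: "norm (\<chi> i. gf i p) \<le> D"
  shows "norm (x' - (\<chi> i. avg x')) \<le> b * (norm (x - (\<chi> i. avg x))
           + \<mu> * L * (norm (x - (\<chi> i. avg x)) + sqrt (real CARD('n)) * norm (avg x - p)) + \<mu> * D)"
    (is "_ \<le> b * ?bound")
proof -
  define G where "G = (\<chi> i. gf i (x $ i))"
  define y where "y = x - \<mu> *\<^sub>R G"
  have "y - (\<chi> i. avg y) = (x - (\<chi> i. avg x)) - \<mu> *\<^sub>R (G - (\<chi> i. avg G))"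
    unfolding y_def by (simp add: vec_eq_iff algebra_simps)
  then have "norm (y - (\<chi> i. avg y)) \<le> norm (x - (\<chi> i. avg x)) + \<mu> * norm G"
    using norm_triangle_ineq4[of "x - (\<chi> i. avg x)" "\<mu> *\<^sub>R (G - (\<chi> i. avg G))"]
      norm_consensus_error_le[of G] \<open>0 \<le> \<mu>\<close>
    by (simp add: mult_left_mono order_trans)
  moreover have "norm G \<le> L * (norm (x - (\<chi> i. avg x)) + sqrt (real CARD('n)) * norm (avg x - p)) + D"
  proof -
    have "x - (\<chi> i. p) = (x - (\<chi> i. avg x)) + (\<chi> i. avg x - p)" by (simp add: vec_eq_iff)
    then have "norm (x - (\<chi> i. p)) \<le> norm (x - (\<chi> i. avg x)) + norm ((\<chi> i. avg x - p) :: real^'p^'n)"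
      by (metis norm_triangle_ineq)
    then have "norm (G - (\<chi> i. gf i p)) \<le> L * (norm (x - (\<chi> i. avg x)) + sqrt (real CARD('n)) * norm (avg x - p))"
      using norm_stack_lipschitz[of gf L x "\<chi> i. p", OF lip \<open>0 \<le> L\<close>] \<open>0 \<le> L\<close>
      unfolding G_def norm_const_stack by (simp add: mult_left_mono order_trans)
    then show ?thesis using norm_triangle_ineq[of "G - (\<chi> i. gf i p)" "\<chi> i. gf i p"] grad_p by simp
  qed
  ultimately have "norm (y - (\<chi> i. avg y)) \<le> ?bound"
    using mult_left_mono[of "norm G" _ \<mu>] \<open>0 \<le> \<mu>\<close> by (fastforce simp: algebra_simps)
  moreover have "norm (x' - (\<chi> i. avg x')) \<le> beta_of W ^ t * norm (y - (\<chi> i. avg y))"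
    unfolding step y_def G_def by (rule consensus_error_kron_apply_matpow[OF ds])
  moreover have "beta_of W ^ t * norm (y - (\<chi> i. avg y)) \<le> b * norm (y - (\<chi> i. avg y))"
    using \<open>beta_of W ^ t \<le> b\<close> by (simp add: mult_right_mono)
  moreover have "0 \<le> b" using \<open>beta_of W ^ t \<le> b\<close> beta_of_nonneg[of W] by (meson order_trans zero_le_power)
  ultimately show ?thesis by (meson mult_left_mono order_trans)
qed

section \<open>The error recursion\<close>

lemma coupled_recursion_bounded:
  fixes A B :: "nat \<Rightarrow> real"
  assumes stepA: "\<And>k. A (Suc k) \<le> s * A k + c * B k"
    and stepB: "\<And>k. B (Suc k) \<le> b * (B k + c * (B k + A k) + e)"
    and "0 \<le> s" "0 \<le> c" "0 \<le> b" "0 < \<gamma>" and balance: "s + \<gamma> * c = 1"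
    and margin: "\<gamma> - (\<gamma> + (1 + \<gamma>) * c) * b > 0"
    and R: "A 0 \<le> R" "B 0 / \<gamma> \<le> R" "e * b / (\<gamma> - (\<gamma> + (1 + \<gamma>) * c) * b) \<le> R"
  shows "A k \<le> R \<and> B k \<le> \<gamma> * R"
proof (induction k)
  case 0
  then show ?case using R \<open>0 < \<gamma>\<close> by (simp add: divide_le_eq mult.commute)
next
  case (Suc k)
  have "A (Suc k) \<le> s * R + c * (\<gamma> * R)"
    using stepA[of k] Suc \<open>0 \<le> s\<close> \<open>0 \<le> c\<close>
    by (smt (verit) mult_left_mono)
  also have "\<dots> = (s + \<gamma> * c) * R" by (simp add: algebra_simps)
  also have "\<dots> = R" by (simp add: balance)
  finally have "A (Suc k) \<le> R" .
  moreover have "B (Suc k) \<le> b * (\<gamma> * R + c * (\<gamma> * R + R) + e)"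
    using stepB[of k] Suc \<open>0 \<le> b\<close> \<open>0 \<le> c\<close>
    by (smt (verit) mult_left_mono)
  moreover have "e * b \<le> (\<gamma> - (\<gamma> + (1 + \<gamma>) * c) * b) * R"
    using R(3) margin by (simp add: divide_le_eq mult.commute)
  ultimately show ?case by (simp add: algebra_simps)
qed

lemma power_le_power_if_power_lt_one:
  fixes \<beta> :: real
  assumes "0 \<le> \<beta>" "\<beta> ^ J < 1" "J \<le> t"
  shows "\<beta> ^ t \<le> \<beta> ^ J"
proof -
  have "\<beta> \<le> 1"
    using assms(2) one_le_power[of \<beta> J] by linarith
  then show ?thesis using assms by (simp add: power_decreasing)
qed

text \<open>Writing s = sqrt (1 - C \<mu>), we have C \<mu> = (1 - s) (1 + s) and \<mu> L \<gamma> = 1 - s; the hypothesis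
  on \<mu> is the resulting inequality with the factor 1 + s enlarged to 1 + sqrt 2.\<close>
lemma near_dgd_step_size_conditions:
  fixes \<mu> L C b :: real
  defines "s \<equiv> sqrt (1 - C * \<mu>)" and "\<gamma> \<equiv> (1 - sqrt (1 - C * \<mu>)) / (\<mu> * L)"
  assumes "0 < \<mu>" "0 < L" "0 < C" "C * \<mu> \<le> 1" "0 \<le> b"
    and bound: "\<mu> * (C + L * (1 + sqrt 2)) * (L * b) < C * (1 - b)"
  shows "b < 1" "0 < \<gamma>" "s + \<gamma> * (\<mu> * L) = 1" "0 < \<gamma> - (\<gamma> + (1 + \<gamma>) * \<mu> * L) * b"
proof -
  have "0 \<le> \<mu> * (C + L * (1 + sqrt 2)) * (L * b)"
    using \<open>0 < \<mu>\<close> \<open>0 < L\<close> \<open>0 < C\<close> \<open>0 \<le> b\<close> by simp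
  then have "0 < C * (1 - b)" using bound by linarith
  then show "b < 1" using \<open>0 < C\<close> by (simp add: zero_less_mult_iff)
  have "0 \<le> s" "s < 1" and C\<mu>: "C * \<mu> = (1 - s) * (1 + s)"
    using \<open>0 < C\<close> \<open>0 < \<mu>\<close> \<open>C * \<mu> \<le> 1\<close> unfolding s_def by (auto simp: algebra_simps)
  have "0 < \<mu> * L" using \<open>0 < \<mu>\<close> \<open>0 < L\<close> by simp
  have \<gamma>\<mu>L: "\<gamma> * (\<mu> * L) = 1 - s"
    using \<open>0 < \<mu>\<close> \<open>0 < L\<close> unfolding \<gamma>_def s_def by simp
  then show "s + \<gamma> * (\<mu> * L) = 1" by simp
  show "0 < \<gamma>" using \<gamma>\<mu>L \<open>s < 1\<close> \<open>0 < \<mu> * L\<close> by (smt (verit) mult_nonpos_nonneg)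
  have "1 + s \<le> 1 + sqrt 2"
    using \<open>s < 1\<close> real_sqrt_ge_one[of 2] by linarith
  then have "\<mu> * L * (1 + s) \<le> \<mu> * L * (1 + sqrt 2)"
    using \<open>0 < \<mu> * L\<close> by (simp add: mult_left_mono)
  then have "\<mu> * L * b * ((1 - s) * (1 + s) + \<mu> * L * (1 + s))
               \<le> \<mu> * L * b * (C * \<mu> + \<mu> * L * (1 + sqrt 2))"
    using C\<mu> \<open>0 < \<mu> * L\<close> \<open>0 \<le> b\<close> by (intro mult_left_mono) auto
  also have "\<dots> = \<mu> * (\<mu> * (C + L * (1 + sqrt 2)) * (L * b))"
    by (simp add: algebra_simps)
  also have "\<dots> < \<mu> * (C * (1 - b))"
    using bound \<open>0 < \<mu>\<close> by simp
  also have "\<dots> = (C * \<mu>) * (1 - b)"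
    by (simp add: algebra_simps)
  also have "\<dots> = (1 + s) * ((1 - s) * (1 - b))"
    unfolding C\<mu> by (simp add: algebra_simps)
  finally have "(1 + s) * (\<mu> * L * b * ((1 - s) + \<mu> * L)) < (1 + s) * ((1 - s) * (1 - b))"
    by (simp add: algebra_simps)
  then have "\<mu> * L * b * ((1 - s) + \<mu> * L) < (1 - s) * (1 - b)"
    using \<open>0 \<le> s\<close> by (simp add: mult_less_cancel_left_pos)
  moreover have "\<mu> * L * (\<gamma> - (\<gamma> + (1 + \<gamma>) * \<mu> * L) * b)
      = (1 - s) - ((1 - s) + \<mu> * L * (\<mu> * L + (1 - s))) * b"
    by (simp add: algebra_simps flip: \<gamma>\<mu>L)
  ultimately have "0 < \<mu> * L * (\<gamma> - (\<gamma> + (1 + \<gamma>) * \<mu> * L) * b)"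
    by (simp add: algebra_simps)
  then show "0 < \<gamma> - (\<gamma> + (1 + \<gamma>) * \<mu> * L) * b"
    using \<open>0 < \<mu> * L\<close> by (simp add: zero_less_mult_iff)
qed

theorem lemma6p1:
  fixes W :: "real^'n^'n"
    and f :: "'n \<Rightarrow> real^'p \<Rightarrow> real" and gf :: "'n \<Rightarrow> real^'p \<Rightarrow> real^'p"
    and Lf :: "'n \<Rightarrow> real"
    and g :: "real^'m \<Rightarrow> real" and gg :: "real^'m \<Rightarrow> real^'m"
    and H :: "real^'p^'m" and \<alpha> Lg cH \<mu> :: real
    and J :: nat and t :: "nat \<Rightarrow> nat" and x :: "nat \<Rightarrow> real^'p^'n"
  defines "n \<equiv> real CARD('n)"
  defines "\<beta> \<equiv> beta_of W"
  defines "F \<equiv> (\<lambda>z. (1 / n) * (\<Sum>i\<in>UNIV. f i z))"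
  defines "Xs \<equiv> minimizers F"
  defines "proj \<equiv> closest_point Xs"
  defines "CH \<equiv> 1 / (onorm (\<lambda>v. H *v v))\<^sup>2"
  defines "D \<equiv> (SUP z\<in>Xs. sqrt (\<Sum>j\<in>UNIV. (norm (gf j z))\<^sup>2))"
  defines "L \<equiv> Max (range Lf)"
  defines "C2 \<equiv> 2 * Lg * \<alpha> * cH / (Lg + \<alpha>)"
  defines "A \<equiv> (\<lambda>k. sqrt n * norm (avg (x k) - proj (avg (x k))))"
  defines "B \<equiv> (\<lambda>k. norm (x k - (\<chi> i. avg (x k))))"
  defines "\<gamma> \<equiv> (1 - sqrt (1 - C2 * \<mu>)) / (\<mu> * L)"
  defines "R \<equiv> Max {A 0, B 0 / \<gamma>, \<mu> * D * \<beta> ^ J / (\<gamma> - (\<gamma> + (1 + \<gamma>) * \<mu> * L) * \<beta> ^ J)}"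
  assumes W_ds: "doubly_stochastic W"
    and W_conn: "strongly_connected_with_loops W"
    and f_smooth: "\<And>i. Lf i > 0 \<and> smooth (f i) (gf i) (Lf i)"
    and g_sc: "\<alpha> > 0" "strongly_convex g gg \<alpha>"
    and g_smooth: "smooth g gg Lg"
    and F_comp: "\<And>z. F z = g (H *v z)"
    and F_min: "Xs \<noteq> {}"
    and D_fin: "bdd_above ((\<lambda>z. sqrt (\<Sum>j\<in>UNIV. (norm (gf j z))\<^sup>2)) ` Xs)"
    and hoffman: "cH > 0" "\<And>z. (norm (H *v z - H *v proj z))\<^sup>2 \<ge> cH * (norm (z - proj z))\<^sup>2"
    and t_ge: "\<And>k. t k \<ge> J"
    and mu_pos: "0 < \<mu>"
    and mu_bd1: "\<mu> < 2 * CH / (Lg + \<alpha>)"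
    and mu_bd2: "\<mu> * (C2 + L * (1 + sqrt 2)) * (L * \<beta> ^ J) < C2 * (1 - \<beta> ^ J)"
    and iter: "near_dgd_plus W \<mu> gf t x"
  shows "\<forall>k. A k \<le> R \<and> B k \<le> \<gamma> * R"
proof -
  have "Lf i \<le> L" for i unfolding L_def by (rule Max_ge) auto
  then have "0 < L" and lip: "\<And>i a b. norm (gf i a - gf i b) \<le> L * norm (a - b)"
    using f_smooth smooth_mono unfolding smooth_def by (meson order.strict_trans2)+
  have "is_gradient F (\<lambda>z. avg (\<chi> i. gf i z))"
    unfolding F_def n_def using f_smooth unfolding smooth_def by (intro is_gradient_average) blast
  note centralized = composite_gradient_step_contraction[OF this F_comp F_min[unfolded Xs_def]
      g_sc(2,1) g_smooth hoffman(2)[unfolded proj_def Xs_def] mu_pos mu_bd1[unfolded CH_def],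
      folded Xs_def proj_def C2_def]
  have proj_in: "proj z \<in> Xs" for z
    using closest_point_in_set[OF centralized(1) F_min] unfolding proj_def .
  have "0 < C2"
    using g_sc hoffman(1) strongly_convex_le_smooth[OF g_sc(2) g_smooth] unfolding C2_def by auto
  note step_size = near_dgd_step_size_conditions[OF mu_pos \<open>0 < L\<close> \<open>0 < C2\<close> centralized(2) _ mu_bd2,
      folded \<gamma>_def, unfolded \<beta>_def, OF zero_le_power[OF beta_of_nonneg]]
  have beta_t: "\<beta> ^ t k \<le> \<beta> ^ J" for k
    using power_le_power_if_power_lt_one[OF beta_of_nonneg step_size(1) t_ge] unfolding \<beta>_def .
  have D: "norm (\<chi> i. gf i q) \<le> D" if "q \<in> Xs" for q
    using cSUP_upper[OF that D_fin] unfolding D_def by (simp add: norm_vec_def[of "\<chi> i. gf i q"] L2_set_def)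
  have stepA: "A (Suc k) \<le> sqrt (1 - C2 * \<mu>) * A k + \<mu> * L * B k" for k
    unfolding A_def B_def n_def proj_def
    by (rule near_dgd_average_step[OF W_ds _ lip _ _ centralized(1) F_min])
       (use iter centralized(3)[unfolded proj_def] mu_pos \<open>0 < L\<close> in \<open>auto simp: near_dgd_plus_def\<close>)
  have stepB: "B (Suc k) \<le> \<beta> ^ J * (B k + \<mu> * L * (B k + A k) + \<mu> * D)" for k
    unfolding A_def B_def n_def \<beta>_def
    by (rule near_dgd_consensus_step[OF W_ds _ lip _ _ beta_t[unfolded \<beta>_def] D[OF proj_in]])
       (use iter mu_pos \<open>0 < L\<close> in \<open>auto simp: near_dgd_plus_def\<close>)
  show ?thesis
    by (intro allI coupled_recursion_bounded[where A = A and B = B and c = "\<mu> * L" and e = "\<mu> * D"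
          and b = "\<beta> ^ J", OF stepA stepB _ _ _ step_size(2,3)])
       (use step_size(4) centralized(2) mu_pos \<open>0 < L\<close> in \<open>auto simp: R_def \<beta>_def beta_of_nonneg mult.assoc\<close>)
qed

end
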